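(* Let $a$ and $b$ be relatively prime integers with $1<a<b$, let $(u,v)$ be the definitely least solution of $ax+by=1$, let $S=\langle a,b\rangle$, and let $h=\min I(S)$. Then $$I(S)=\{\,h+kb+ja : 0\le k\le |v|-1,\ 0\le j\le |u|-1\,\},$$ i.e. $I(S)=\{h,h+a,\dots,h+(|u|-1)a\}\cup\{h+b,h+b+a,\dots,h+b+(|u|-1)a\}\cup\cdots\cup\{h+(|v|-1)b,\dots,h+(|v|-1)b+(|u|-1)a\}$.
   Context: $\mathbb{N}$ is the set of nonnegative integers and $\langle a,b\rangle=\{\lambda_1a+\lambda_2b:\lambda_1,\lambda_2\in\mathbb{N}\}$. An isolated gap of a numerical semigroup $S$ is an element $x\in\mathbb{N}\setminus S$ with $x-1\in S$ and $x+1\in S$; $I(S)$ is the set of isolated gaps (it is nonempty for $S=\langle a,b\rangle$). The definitely least solution $(u,v)$ of $ax+by=1$ is the unique integer solution for which both $|u|$ and $|v|$ are as small as possible; equivalently the solution with $|u|\le b/2$ and $|v|\le a/2$. *)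

theory Defs
  imports Main
begin

definition semigroup2 :: "nat \<Rightarrow> nat \<Rightarrow> nat set" where
  "semigroup2 a b = {l1 * a + l2 * b | l1 l2. True}"

definition isolated_gaps :: "nat set \<Rightarrow> nat set" where
  "isolated_gaps S = {x. x \<notin> S \<and> x \<ge> 1 \<and> x - 1 \<in> S \<and> x + 1 \<in> S}"

definition definitely_least_sol :: "int \<Rightarrow> int \<Rightarrow> int \<Rightarrow> int \<Rightarrow> bool" where
  "definitely_least_sol a b u v \<longleftrightarrow>
     a * u + b * v = 1 \<and>
     (\<forall>x y. a * x + b * y = 1 \<longrightarrow> \<bar>u\<bar> \<le> \<bar>x\<bar> \<and> \<bar>v\<bar> \<le> \<bar>y\<bar>)"

end

theory Submission
  imports Defs
begin

text \<open>Every integer has a unique representation \<open>p a + q b\<close> with \<open>0 \<le> q < a\<close>, and it lies in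
  \<open>\<langle>a,b\<rangle>\<close> iff \<open>p \<ge> 0\<close>. Since the definitely least solution has \<open>u v < 0\<close>, the number
  \<open>d = a|u| - b|v|\<close> is \<open>\<plusminus>1\<close>, and the two neighbours \<open>x \<plusminus> d\<close> of a gap \<open>x = p a + q b\<close>
  (so \<open>p < 0\<close>) are \<open>(p + |u|) a + (q - |v|) b\<close> and \<open>(p - |u|) a + (q + |v|) b\<close>. As
  \<open>|u| \<le> b/2\<close> and \<open>|v| \<le> a/2\<close>, bringing \<open>q \<mp> |v|\<close> back into \<open>[0,a)\<close> moves the first
  coefficient by at most one \<open>b\<close>, and one reads off that \<open>x\<close> is isolated exactly when
  \<open>-|u| \<le> p\<close> and \<open>a - |v| \<le> q\<close>: a \<open>|v| \<times> |u|\<close> grid with corner \<open>(a - |v|) b - |u| a\<close>.\<close>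

lemma in_semigroup2_iff_nonneg:
  fixes a b :: nat and p r :: int
  assumes "coprime a b" and "0 \<le> r" and "r < int a"
  shows "p * int a + r * int b \<in> int ` semigroup2 a b \<longleftrightarrow> 0 \<le> p"
proof
  assume "0 \<le> p"
  then have "p * int a + r * int b = int (nat p * a + nat r * b)"
    using \<open>0 \<le> r\<close> by simp
  then show "p * int a + r * int b \<in> int ` semigroup2 a b"
    unfolding semigroup2_def by blast
next
  assume "p * int a + r * int b \<in> int ` semigroup2 a b"
  then obtain l1 l2 :: nat where "p * int a + r * int b = int l1 * int a + int l2 * int b"
    unfolding semigroup2_def by auto
  then have swap: "(p - int l1) * int a = (int l2 - r) * int b"
    by (simp add: algebra_simps)
  then have "int a dvd (int l2 - r) * int b"
    by (metis dvd_triv_right)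
  then have "int a dvd r - int l2"
    using \<open>coprime a b\<close> by (simp add: coprime_dvd_mult_left_iff dvd_diff_commute)
  then have "0 \<le> int l2 - r"
    using zdvd_imp_le[of "int a" "r - int l2"] \<open>r < int a\<close> by linarith
  then have "0 \<le> (p - int l1) * int a"
    using swap by simp
  then show "0 \<le> p"
    using \<open>r < int a\<close> \<open>0 \<le> r\<close> by (simp add: zero_le_mult_iff)
qed

lemma in_semigroup2_iff:
  fixes a b :: nat and p q :: int
  assumes "coprime a b" and "0 < a"
  shows "p * int a + q * int b \<in> int ` semigroup2 a b \<longleftrightarrow> 0 \<le> p + (q div int a) * int b"
proof -
  define d r where "d = q div int a" and "r = q mod int a"
  have "q = d * int a + r"
    unfolding d_def r_def by simp
  then have "p * int a + q * int b = (p + d * int b) * int a + r * int b"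
    by (simp add: algebra_simps)
  then show ?thesis
    unfolding d_def r_def
    using in_semigroup2_iff_nonneg[OF \<open>coprime a b\<close>] \<open>0 < a\<close> by simp
qed

lemma lincomb_repr_coeff_bounded:
  fixes a b :: nat and n :: int
  assumes "coprime a b" and "0 < a"
  obtains p q where "n = p * int a + q * int b" and "0 \<le> q" and "q < int a"
proof -
  obtain s t where "s * int a + t * int b = 1"
    using bezout_int[of "int a" "int b"] \<open>coprime a b\<close> by auto
  define d r where "d = n * t div int a" and "r = n * t mod int a"
  have nt: "n * t = d * int a + r"
    unfolding d_def r_def by simp
  have "n = n * (s * int a + t * int b)"
    using \<open>s * int a + t * int b = 1\<close> by simp
  also have "\<dots> = n * s * int a + (n * t) * int b"
    by (simp add: algebra_simps)
  also have "\<dots> = (n * s + d * int b) * int a + r * int b"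
    unfolding nt by (simp add: algebra_simps)
  finally have "n = (n * s + d * int b) * int a + r * int b" .
  moreover have "0 \<le> r" and "r < int a"
    unfolding r_def using \<open>0 < a\<close> by simp_all
  ultimately show thesis
    using that by blast
qed

lemma isolated_gaps_iff_int:
  "x \<in> isolated_gaps S \<longleftrightarrow>
     int x \<notin> int ` S \<and> int x - 1 \<in> int ` S \<and> int x + 1 \<in> int ` S"
proof (cases x)
  case 0
  then show ?thesis
    by (auto simp: isolated_gaps_def)
next
  case (Suc m)
  then have minus: "int x - 1 = int (x - 1)" and plus: "int x + 1 = int (x + 1)"
    by simp_all
  have mem: "\<And>n. int n \<in> int ` S \<longleftrightarrow> n \<in> S"
    by (simp add: inj_image_mem_iff)
  show ?thesis
    unfolding isolated_gaps_def minus plus mem using Suc by simp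
qed

lemma neighbour_coeffs_nonneg_iff:
  fixes a b p q U V :: int
  assumes "p < 0" and "0 \<le> q" and "q < a" and "0 \<le> U" and "2 * U \<le> b"
    and "0 \<le> V" and "2 * V \<le> a"
  shows "0 \<le> p + U + (q - V) div a * b \<and> 0 \<le> p - U + (q + V) div a * b
    \<longleftrightarrow> - U \<le> p \<and> a - V \<le> q"
proof -
  have below: "(q - V) div a = (if V \<le> q then 0 else - 1)"
  proof (cases "V \<le> q")
    case False
    then have "(q - V + a) div a = 0"
      using assms by simp
    moreover have "(q - V + a) div a = (q - V) div a + 1"
      using assms by (intro div_add_self2) simp
    ultimately show ?thesis
      using False by simp
  qed (use assms in simp)
  have above: "(q + V) div a = (if q + V < a then 0 else 1)"
  proof (cases "q + V < a")
    case False
    then have "(q + V - a) div a = 0"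
      using assms by simp
    moreover have "(q + V - a + a) div a = (q + V - a) div a + 1"
      using assms by (intro div_add_self2) simp
    ultimately show ?thesis
      using False by simp
  qed (use assms in simp)
  show ?thesis
    unfolding below above using assms by auto
qed

lemma isolated_gap_iff_coeffs:
  fixes a b x :: nat and p q U V :: int
  assumes "coprime a b" and "0 < a"
    and "0 \<le> U" and "2 * U \<le> int b" and "0 \<le> V" and "2 * V \<le> int a"
    and unimodular: "\<bar>int a * U - int b * V\<bar> = 1"
    and repr: "int x = p * int a + q * int b" and "0 \<le> q" and "q < int a"
  shows "x \<in> isolated_gaps (semigroup2 a b) \<longleftrightarrow> - U \<le> p \<and> p < 0 \<and> int a - V \<le> q"
proof -
  let ?S = "int ` semigroup2 a b"
  define d where "d = int a * U - int b * V"
  have "d = 1 \<or> d = - 1"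
    using unimodular unfolding d_def by linarith
  then have neighbours: "int x - 1 \<in> ?S \<and> int x + 1 \<in> ?S \<longleftrightarrow> int x + d \<in> ?S \<and> int x - d \<in> ?S"
    by auto
  have "int x + d = (p + U) * int a + (q - V) * int b"
    and "int x - d = (p - U) * int a + (q + V) * int b"
    unfolding repr d_def by (simp_all add: algebra_simps)
  then have "int x + d \<in> ?S \<and> int x - d \<in> ?S \<longleftrightarrow> - U \<le> p \<and> int a - V \<le> q" if "p < 0"
    using neighbour_coeffs_nonneg_iff[of p q "int a" U "int b" V] that assms
    by (simp add: in_semigroup2_iff)
  moreover have "int x \<notin> ?S \<longleftrightarrow> p < 0"
    unfolding repr using in_semigroup2_iff_nonneg assms by (simp add: not_le)
  ultimately show ?thesis
    unfolding isolated_gaps_iff_int[of x] neighbours by auto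
qed

lemma isolated_gaps_semigroup2_eq_grid:
  fixes a b :: nat and U V :: int
  assumes "coprime a b" and "0 < a"
    and "0 \<le> U" and "2 * U \<le> int b" and "0 \<le> V" and "2 * V \<le> int a"
    and "\<bar>int a * U - int b * V\<bar> = 1"
  shows "isolated_gaps (semigroup2 a b) =
    {nat (int b * (int a - V) - int a * U) + k * b + j * a | k j. k < nat V \<and> j < nat U}"
    (is "_ = {?h + k * b + j * a | k j. _}")
proof -
  note gap_iff = isolated_gap_iff_coeffs[OF assms]
  have "int a * (2 * U) \<le> int a * int b"
    using assms by (intro mult_left_mono) simp_all
  moreover have "int b * int a \<le> int b * (2 * (int a - V))"
    using assms by (intro mult_left_mono) simp_all
  ultimately have h: "int ?h = int b * (int a - V) - int a * U"
    by (simp add: algebra_simps)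
  show ?thesis
  proof (intro set_eqI iffI)
    fix x
    assume gap: "x \<in> isolated_gaps (semigroup2 a b)"
    obtain p q where repr: "int x = p * int a + q * int b" and "0 \<le> q" and "q < int a"
      using lincomb_repr_coeff_bounded assms by blast
    with gap have bounds: "- U \<le> p" "p < 0" "int a - V \<le> q"
      using gap_iff by blast+
    define k j where "k = nat (q - (int a - V))" and "j = nat (p + U)"
    have "int x = int (?h + k * b + j * a)"
      unfolding repr k_def j_def using bounds h by (simp add: algebra_simps)
    moreover have "k < nat V" and "j < nat U"
      unfolding k_def j_def using bounds \<open>q < int a\<close> by simp_all
    ultimately show "x \<in> {?h + k * b + j * a | k j. k < nat V \<and> j < nat U}"
      by (intro CollectI exI conjI) (simp_all only: of_nat_eq_iff)
  next
    fix x
    assume "x \<in> {?h + k * b + j * a | k j. k < nat V \<and> j < nat U}"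
    then obtain k j where x: "x = ?h + k * b + j * a" and "k < nat V" and "j < nat U"
      by blast
    have "int x = (int j - U) * int a + (int a - V + int k) * int b"
      unfolding x using h by (simp add: algebra_simps)
    then show "x \<in> isolated_gaps (semigroup2 a b)"
      using gap_iff \<open>k < nat V\<close> \<open>j < nat U\<close> assms by simp
  qed
qed

lemma Min_grid:
  fixes h a b m n :: nat
  assumes "0 < m" and "0 < n"
  shows "Min {h + k * b + j * a | k j. k < m \<and> j < n} = h"
proof (rule Min_eqI)
  show "finite {h + k * b + j * a | k j. k < m \<and> j < n}"
    by (rule finite_image_set2) simp_all
  show "h \<in> {h + k * b + j * a | k j. k < m \<and> j < n}"
    using assms by force
qed auto

lemma definitely_least_sol_abs_le_half:
  fixes A B u v :: int
  assumes "definitely_least_sol A B u v" and "0 < A" and "0 < B"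
  shows "2 * \<bar>u\<bar> \<le> B" and "2 * \<bar>v\<bar> \<le> A"
proof -
  have sol: "A * u + B * v = 1"
    and least: "\<And>x y. A * x + B * y = 1 \<Longrightarrow> \<bar>u\<bar> \<le> \<bar>x\<bar> \<and> \<bar>v\<bar> \<le> \<bar>y\<bar>"
    using assms(1) unfolding definitely_least_sol_def by blast+
  have "A * (u - B) + B * (v + A) = 1" and "A * (u + B) + B * (v - A) = 1"
    using sol by (simp_all add: algebra_simps)
  then have "\<bar>u\<bar> \<le> \<bar>u - B\<bar>" "\<bar>u\<bar> \<le> \<bar>u + B\<bar>" "\<bar>v\<bar> \<le> \<bar>v + A\<bar>" "\<bar>v\<bar> \<le> \<bar>v - A\<bar>"
    using least by blast+
  then show "2 * \<bar>u\<bar> \<le> B" and "2 * \<bar>v\<bar> \<le> A"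
    using assms(2,3) by linarith+
qed

lemma bezout_coeffs_opposite_signs:
  fixes A B u v :: int
  assumes sol: "A * u + B * v = 1" and "1 < A" and "1 < B"
  shows "u * v < 0"
proof -
  have "u \<noteq> 0"
    using sol \<open>1 < B\<close> pos_zmult_eq_1_iff[of B v] by auto
  moreover have "v \<noteq> 0"
    using sol \<open>1 < A\<close> pos_zmult_eq_1_iff[of A u] by auto
  moreover have "\<not> (0 < u \<and> 0 < v)"
    using sol assms mult_mono[of 1 A 1 u] mult_mono[of 1 B 1 v] by auto
  moreover have "\<not> (u < 0 \<and> v < 0)"
    using sol assms mult_pos_neg[of A u] mult_pos_neg[of B v] by auto
  ultimately show ?thesis
    by (auto simp: mult_less_0_iff)
qed

theorem theorem4p8:
  fixes a b :: nat and u v :: int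
  assumes "coprime a b" and "1 < a" and "a < b"
    and "definitely_least_sol (int a) (int b) u v"
  shows "isolated_gaps (semigroup2 a b) =
    {Min (isolated_gaps (semigroup2 a b)) + k * b + j * a | k j.
       k < nat \<bar>v\<bar> \<and> j < nat \<bar>u\<bar>}"
proof -
  have sol: "int a * u + int b * v = 1"
    using assms(4) unfolding definitely_least_sol_def by blast
  have halves: "2 * \<bar>u\<bar> \<le> int b" "2 * \<bar>v\<bar> \<le> int a"
    using definitely_least_sol_abs_le_half assms by simp_all
  have "u * v < 0"
    using bezout_coeffs_opposite_signs[OF sol] assms by simp
  then have unimodular: "\<bar>int a * \<bar>u\<bar> - int b * \<bar>v\<bar>\<bar> = 1"
    and "0 < nat \<bar>u\<bar>" and "0 < nat \<bar>v\<bar>"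
    using sol by (auto simp: mult_less_0_iff)
  have grid: "isolated_gaps (semigroup2 a b) =
    {nat (int b * (int a - \<bar>v\<bar>) - int a * \<bar>u\<bar>) + k * b + j * a | k j.
       k < nat \<bar>v\<bar> \<and> j < nat \<bar>u\<bar>}"
    using isolated_gaps_semigroup2_eq_grid[OF _ _ _ halves(1) _ halves(2) unimodular] assms
    by simp
  show ?thesis
    unfolding grid Min_grid[OF \<open>0 < nat \<bar>v\<bar>\<close> \<open>0 < nat \<bar>u\<bar>\<close>] ..
qed

end
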